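(* Let $\bm{\sigma}=[\mathcal{T}_0,\dots,\mathcal{T}_N]$ be a finite trajectory, $\varphi_1,\varphi_2$ MTL formulas, and suppose binary variables $\xi^b_{\varphi_i,j}\in\{0,1\}$ satisfy $\xi^b_{\varphi_i,j}=1\Leftrightarrow\bm{\sigma}\models_j\varphi_i$ for $i=1,2$ and all relevant $j$. Let $k$ be a time index and $t_1\le t_2$ nonnegative integers with $k+t_2\le N$, and let $\tau=t_2-t_1+1$. Then $\bm{\sigma}\models_k \varphi_1\,\mathcal{U}_{[\![t_1,t_2]\!]}\,\varphi_2$ if and only if the following $\tau$ linear inequalities hold: $$\sum_{j=k+t_1}^{k+t_2}\xi^b_{\varphi_2,j}\ge1,$$ $$\xi^b_{\varphi_2,t}\le\sum_{j=k+t_1}^{t-1}\left(\frac{\xi^b_{\varphi_1,j}}{t-t_1-k}+\xi^b_{\varphi_2,j}\right)\quad\text{for all integers } t \text{ with } k+t_1<t\le k+t_2.$$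
   Context: MTL semantics on a finite trajectory $\bm{\sigma}=[\mathcal{T}_0,\dots,\mathcal{T}_N]$, $\mathcal{T}_k\subseteq\mathcal{P}$. The (nonstandard) until operator is defined by: $\bm{\sigma}\models_k\varphi_1\,\mathcal{U}_{[\![t_1,t_2]\!]}\,\varphi_2$ iff there exists an integer $t\in[k+t_1,k+t_2]$ with $\bm{\sigma}\models_t\varphi_2$ and $\bm{\sigma}\models_{t'}\varphi_1$ for all integers $t'$ with $k+t_1\le t'<t$. Here $[\![a,b]\!]$ denotes the integers in $[a,b]$. *)

theory Defs
  imports Complex_Main
begin

datatype 'p mtl =
    MTrue
  | Prop 'p
  | Not "'p mtl"
  | And "'p mtl" "'p mtl"
  | Until "'p mtl" nat nat "'p mtl"

fun sat :: "'p set list \<Rightarrow> nat \<Rightarrow> 'p mtl \<Rightarrow> bool" where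
  "sat \<sigma> k MTrue = True"
| "sat \<sigma> k (Prop p) = (k < length \<sigma> \<and> p \<in> \<sigma> ! k)"
| "sat \<sigma> k (Not \<phi>) = (\<not> sat \<sigma> k \<phi>)"
| "sat \<sigma> k (And \<phi> \<psi>) = (sat \<sigma> k \<phi> \<and> sat \<sigma> k \<psi>)"
| "sat \<sigma> k (Until \<phi>1 t1 t2 \<phi>2) =
     (\<exists>t\<in>{k+t1..k+t2}. sat \<sigma> t \<phi>2 \<and> (\<forall>t'. k+t1 \<le> t' \<and> t' < t \<longrightarrow> sat \<sigma> t' \<phi>1))"

end

theory Submission
  imports Defs
begin

text \<open>Writing P and Q for the truth values of the two operands, the until formula holds on
  the window [a, b] iff Q holds somewhere in it and, at every time t in (a, b] where Q holds,
  either P held throughout [a, t) or Q already held somewhere in [a, t); for the converse take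
  the first time at which Q holds. The first inequality of the encoding says that Q holds
  somewhere, and the inequality at t is exactly the local condition at t: its right-hand side
  is the mean of P plus the count of Q over [a, t), and since that mean lies in [0, 1] while
  the count is a natural number, it is at least 1 iff the mean is 1 or the count is positive.\<close>

lemma exists_until_iff:
  fixes a b :: "'a :: wellorder"
  shows "(\<exists>t\<in>{a..b}. Q t \<and> (\<forall>j\<in>{a..<t}. P j)) \<longleftrightarrow>
   (\<exists>j\<in>{a..b}. Q j) \<and>
   (\<forall>t\<in>{a<..b}. Q t \<longrightarrow> (\<forall>j\<in>{a..<t}. P j) \<or> (\<exists>j\<in>{a..<t}. Q j))"
  (is "?until \<longleftrightarrow> ?some_Q \<and> ?local")
proof
  assume ?until
  then obtain t0 where t0: "t0 \<in> {a..b}" "Q t0" and P_before: "\<forall>j\<in>{a..<t0}. P j"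
    by blast
  have ?local
  proof (intro ballI impI)
    fix t
    assume "t \<in> {a<..b}"
    show "(\<forall>j\<in>{a..<t}. P j) \<or> (\<exists>j\<in>{a..<t}. Q j)"
    proof (cases "t0 < t")
      case True
      then have "t0 \<in> {a..<t}" using t0(1) by simp
      then show ?thesis using t0(2) by blast
    next
      case False
      then show ?thesis using P_before by auto
    qed
  qed
  then show "?some_Q \<and> ?local" using t0 by blast
next
  assume "?some_Q \<and> ?local"
  then obtain t0 where t0: "t0 \<in> {a..b}" "Q t0"
    and first: "\<And>j. j < t0 \<Longrightarrow> \<not> (j \<in> {a..b} \<and> Q j)" and local: ?local
    using exists_least_iff[of "\<lambda>t. t \<in> {a..b} \<and> Q t"] by blast
  have "\<forall>j\<in>{a..<t0}. P j"
  proof (cases "t0 = a")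
    case False
    then have "t0 \<in> {a<..b}" using t0(1) by auto
    moreover have "\<not> (\<exists>j\<in>{a..<t0}. Q j)" using first t0(1) by auto
    ultimately show ?thesis using local t0(2) by blast
  qed simp
  then show ?until using t0 by blast
qed

lemma sat_Until_iff:
  assumes "k + t2 \<le> N"
    and "\<And>j. j \<le> N \<Longrightarrow> sat \<sigma> j \<phi>1 \<longleftrightarrow> P j" and "\<And>j. j \<le> N \<Longrightarrow> sat \<sigma> j \<phi>2 \<longleftrightarrow> Q j"
  shows "sat \<sigma> k (Until \<phi>1 t1 t2 \<phi>2) \<longleftrightarrow>
    (\<exists>t\<in>{k+t1..k+t2}. Q t \<and> (\<forall>j\<in>{k+t1..<t}. P j))"
  unfolding sat.simps
proof (rule bex_cong[OF refl])
  fix t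
  assume "t \<in> {k+t1..k+t2}"
  then have "t \<le> N" and "\<forall>j\<in>{k+t1..<t}. j \<le> N" using assms(1) by auto
  then show "(sat \<sigma> t \<phi>2 \<and> (\<forall>t'. k+t1 \<le> t' \<and> t' < t \<longrightarrow> sat \<sigma> t' \<phi>1)) \<longleftrightarrow>
      (Q t \<and> (\<forall>j\<in>{k+t1..<t}. P j))"
    using assms(2,3) by auto
qed

lemma card_le_sum_of_bool_iff:
  assumes "finite A"
  shows "real (card A) \<le> (\<Sum>j\<in>A. of_bool (P j)) \<longleftrightarrow> (\<forall>j\<in>A. P j)"
proof -
  have "card A \<le> card (A \<inter> {j. P j}) \<longleftrightarrow> A \<inter> {j. P j} = A"
    using assms card_seteq[of A "A \<inter> {j. P j}"] by auto
  then show ?thesis using assms by auto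
qed

lemma one_le_sum_of_bool_iff:
  assumes "finite A"
  shows "1 \<le> (\<Sum>j\<in>A. of_bool (P j) :: real) \<longleftrightarrow> (\<exists>j\<in>A. P j)"
  using assms by (auto simp: Suc_le_eq card_gt_0_iff)

lemma of_bool_le_mean_plus_count_iff:
  assumes "finite A" "A \<noteq> {}"
  shows "of_bool q \<le> (\<Sum>j\<in>A. of_bool (P j)) / real (card A) + (\<Sum>j\<in>A. of_bool (Q j)) \<longleftrightarrow>
    (q \<longrightarrow> (\<forall>j\<in>A. P j) \<or> (\<exists>j\<in>A. Q j))"
proof -
  define mean where "mean = (\<Sum>j\<in>A. of_bool (P j)) / real (card A)"
  define count :: real where "count = (\<Sum>j\<in>A. of_bool (Q j))"
  have card_pos: "0 < real (card A)"
    using assms by (simp add: card_gt_0_iff)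
  have "(\<Sum>j\<in>A. of_bool (P j)) \<le> real (card A)"
    using sum_mono[of A "\<lambda>j. of_bool (P j)" "\<lambda>_. 1 :: real"] by simp
  then have mean_le_1: "mean \<le> 1"
    using card_pos by (simp add: mean_def del: sum_of_bool_eq)
  have mean_ge_1: "1 \<le> mean \<longleftrightarrow> (\<forall>j\<in>A. P j)"
    using card_pos card_le_sum_of_bool_iff[OF assms(1), of P]
    by (simp add: mean_def le_divide_eq_1 del: sum_of_bool_eq)
  have "0 \<le> mean"
    unfolding mean_def by (simp add: sum_nonneg del: sum_of_bool_eq)
  moreover have "count = 0 \<or> 1 \<le> count"
    using one_le_sum_of_bool_iff[OF assms(1), of Q] by (auto simp: count_def)
  moreover have count_ge_1: "1 \<le> count \<longleftrightarrow> (\<exists>j\<in>A. Q j)"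
    unfolding count_def by (rule one_le_sum_of_bool_iff[OF assms(1)])
  ultimately have "of_bool q \<le> mean + count \<longleftrightarrow> (q \<longrightarrow> 1 \<le> mean \<or> 1 \<le> count)"
    using mean_le_1 by (cases q) auto
  then show ?thesis
    unfolding mean_ge_1 count_ge_1 by (simp add: mean_def count_def del: sum_of_bool_eq)
qed

theorem proposition4:
  fixes \<sigma> :: "'p set list" and N k t1 t2 :: nat
    and \<phi>1 \<phi>2 :: "'p mtl" and xi1 xi2 :: "nat \<Rightarrow> real"
  assumes "length \<sigma> = N + 1"
    and "\<And>j. xi1 j \<in> {0, 1}" and "\<And>j. xi2 j \<in> {0, 1}"
    and "\<And>j. j \<le> N \<Longrightarrow> (xi1 j = 1 \<longleftrightarrow> sat \<sigma> j \<phi>1)"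
    and "\<And>j. j \<le> N \<Longrightarrow> (xi2 j = 1 \<longleftrightarrow> sat \<sigma> j \<phi>2)"
    and "t1 \<le> t2" and "k + t2 \<le> N"
  shows "sat \<sigma> k (Until \<phi>1 t1 t2 \<phi>2) \<longleftrightarrow>
    ((\<Sum>j = k+t1..k+t2. xi2 j) \<ge> 1 \<and>
     (\<forall>t::nat. k + t1 < t \<and> t \<le> k + t2 \<longrightarrow>
        xi2 t \<le> (\<Sum>j = k+t1..t-1. xi1 j / real (t - t1 - k) + xi2 j)))"
proof -
  define P Q where "P j \<longleftrightarrow> xi1 j = 1" and "Q j \<longleftrightarrow> xi2 j = 1" for j
  have xi1: "xi1 j = of_bool (P j)" and xi2: "xi2 j = of_bool (Q j)" for j
    using assms(2,3)[of j] by (auto simp: P_def Q_def)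
  have until: "sat \<sigma> k (Until \<phi>1 t1 t2 \<phi>2) \<longleftrightarrow>
      (\<exists>t\<in>{k+t1..k+t2}. Q t \<and> (\<forall>j\<in>{k+t1..<t}. P j))"
    using assms(4,5,7) by (intro sat_Until_iff) (auto simp: P_def Q_def)
  have some_Q: "(\<Sum>j = k+t1..k+t2. xi2 j) \<ge> 1 \<longleftrightarrow> (\<exists>j\<in>{k+t1..k+t2}. Q j)"
    unfolding xi2 by (rule one_le_sum_of_bool_iff) simp
  have local: "xi2 t \<le> (\<Sum>j = k+t1..t-1. xi1 j / real (t - t1 - k) + xi2 j) \<longleftrightarrow>
      (Q t \<longrightarrow> (\<forall>j\<in>{k+t1..<t}. P j) \<or> (\<exists>j\<in>{k+t1..<t}. Q j))" if "k + t1 < t" for t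
  proof -
    from that have "{k+t1..t-1} = {k+t1..<t}" and "t - t1 - k = card {k+t1..<t}" by auto
    then have rhs: "(\<Sum>j = k+t1..t-1. xi1 j / real (t - t1 - k) + xi2 j) =
        (\<Sum>j\<in>{k+t1..<t}. of_bool (P j)) / real (card {k+t1..<t}) + (\<Sum>j\<in>{k+t1..<t}. of_bool (Q j))"
      by (simp only: xi1 xi2 sum.distrib sum_divide_distrib)
    show ?thesis
      unfolding rhs xi2[of t] by (rule of_bool_le_mean_plus_count_iff) (use that in auto)
  qed
  show ?thesis
    unfolding until exists_until_iff some_Q
    unfolding Ball_def[of "{k+t1<..k+t2}"] greaterThanAtMost_iff using local by meson
qed

end
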